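(* Let $G$ be a graph and $e=ab$ an edge of $G$. If $G$ has a minor model of $K_5$ or $K_{2,2,2}$ in which $a$ and $b$ lie in different branch sets, then $G$ has an induced minor model of $K_5$ or $K_{2,2,2}$ in which $a$ and $b$ lie in different branch sets.
   Context: A minor model of $M$ in $G$ is a partition of $V(G)$ into nonempty branch sets $B_x$ ($x\in V(M)$), each inducing a connected subgraph, such that for every $xy\in E(M)$ some edge of $G$ joins $B_x$ and $B_y$. It is an induced minor model if moreover $xy\in E(M)$ if and only if some edge of $G$ joins $B_x$ and $B_y$ (i.e. $M$ is obtained by contractions only). *)

theory Defs
  imports Main
begin

definition graph :: "'a set \<Rightarrow> ('a \<Rightarrow> 'a \<Rightarrow> bool) \<Rightarrow> bool" where
  "graph V E \<longleftrightarrow> finite V \<and> (\<forall>x y. E x y \<longrightarrow> x \<in> V \<and> y \<in> V)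
     \<and> (\<forall>x y. E x y \<longrightarrow> E y x) \<and> (\<forall>x. \<not> E x x)"

definition connected_set :: "('a \<Rightarrow> 'a \<Rightarrow> bool) \<Rightarrow> 'a set \<Rightarrow> bool" where
  "connected_set E S \<longleftrightarrow> S \<noteq> {} \<and>
     (\<forall>x\<in>S. \<forall>y\<in>S. (\<lambda>u v. E u v \<and> u \<in> S \<and> v \<in> S)\<^sup>*\<^sup>* x y)"

definition joined :: "('a \<Rightarrow> 'a \<Rightarrow> bool) \<Rightarrow> 'a set \<Rightarrow> 'a set \<Rightarrow> bool" where
  "joined E A B \<longleftrightarrow> (\<exists>u\<in>A. \<exists>v\<in>B. E u v)"

definition minor_model ::
  "'a set \<Rightarrow> ('a \<Rightarrow> 'a \<Rightarrow> bool) \<Rightarrow> 'b set \<Rightarrow> ('b \<Rightarrow> 'b \<Rightarrow> bool) \<Rightarrow> ('b \<Rightarrow> 'a set) \<Rightarrow> bool" where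
  "minor_model V E VM EM B \<longleftrightarrow>
     (\<forall>x\<in>VM. B x \<subseteq> V \<and> connected_set E (B x)) \<and>
     (\<forall>x\<in>VM. \<forall>y\<in>VM. x \<noteq> y \<longrightarrow> B x \<inter> B y = {}) \<and>
     (\<Union>x\<in>VM. B x) = V \<and>
     (\<forall>x\<in>VM. \<forall>y\<in>VM. EM x y \<longrightarrow> joined E (B x) (B y))"

definition induced_minor_model ::
  "'a set \<Rightarrow> ('a \<Rightarrow> 'a \<Rightarrow> bool) \<Rightarrow> 'b set \<Rightarrow> ('b \<Rightarrow> 'b \<Rightarrow> bool) \<Rightarrow> ('b \<Rightarrow> 'a set) \<Rightarrow> bool" where
  "induced_minor_model V E VM EM B \<longleftrightarrow> minor_model V E VM EM B \<and>
     (\<forall>x\<in>VM. \<forall>y\<in>VM. x \<noteq> y \<longrightarrow> joined E (B x) (B y) \<longrightarrow> EM x y)"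

definition separates :: "'b set \<Rightarrow> ('b \<Rightarrow> 'a set) \<Rightarrow> 'a \<Rightarrow> 'a \<Rightarrow> bool" where
  "separates VM B a b \<longleftrightarrow> (\<exists>x\<in>VM. \<exists>y\<in>VM. x \<noteq> y \<and> a \<in> B x \<and> b \<in> B y)"

text \<open>K5 on vertices {0..4}; K_{2,2,2} on {0..5} with parts {0,1},{2,3},{4,5}.\<close>
definition K5_V :: "nat set" where "K5_V = {0..<5}"
definition K5_E :: "nat \<Rightarrow> nat \<Rightarrow> bool" where
  "K5_E i j \<longleftrightarrow> i \<in> K5_V \<and> j \<in> K5_V \<and> i \<noteq> j"
definition K222_V :: "nat set" where "K222_V = {0..<6}"
definition K222_E :: "nat \<Rightarrow> nat \<Rightarrow> bool" where
  "K222_E i j \<longleftrightarrow> i \<in> K222_V \<and> j \<in> K222_V \<and> i div 2 \<noteq> j div 2"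

end

theory Submission
  imports Defs
begin

text \<open>A minor model of \<open>K\<^sub>5\<close> is automatically induced. For a model of \<open>K\<^sub>2\<^sub>,\<^sub>2\<^sub>,\<^sub>2\<close> that is not
  induced, the branch sets \<open>B p\<close>, \<open>B q\<close> of some part \<open>{p, q}\<close> are joined. Label the other two
  parts \<open>{r, t}\<close> and \<open>{s, u}\<close>; since \<open>t u\<close> is an edge, \<open>B t \<union> B u\<close> is connected, and together
  with \<open>B p, B q, B r, B s\<close> it forms a model of \<open>K\<^sub>5\<close>. Of the two such mergings, \<open>t, u\<close> and
  \<open>r, s\<close>, at least one keeps \<open>a\<close> and \<open>b\<close> apart.\<close>

lemma graph_symp: "graph V E \<Longrightarrow> symp E"
  unfolding graph_def symp_def by blast

lemma joined_commute: "symp E \<Longrightarrow> joined E A B \<Longrightarrow> joined E B A"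
  unfolding joined_def by (blast dest: sympD)

lemma joined_Un [simp]:
  "joined E (A \<union> B) C \<longleftrightarrow> joined E A C \<or> joined E B C"
  "joined E C (A \<union> B) \<longleftrightarrow> joined E C A \<or> joined E C B"
  unfolding joined_def by blast+

lemma connected_set_Un:
  assumes "symp E" and S: "connected_set E S" and T: "connected_set E T" and "joined E S T"
  shows "connected_set E (S \<union> T)"
proof -
  let ?R = "\<lambda>X u v. E u v \<and> u \<in> X \<and> v \<in> X"
  define R where "R = ?R (S \<union> T)"
  have enlarge: "R\<^sup>*\<^sup>* x y" if "(?R X)\<^sup>*\<^sup>* x y" "X \<subseteq> S \<union> T" for X x y
    using rtranclp_mono[of "?R X" R] that unfolding R_def by blast
  obtain u v where uv: "u \<in> S" "v \<in> T" "E u v"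
    using \<open>joined E S T\<close> unfolding joined_def by blast
  have "R\<^sup>*\<^sup>* u v" "R\<^sup>*\<^sup>* v u"
    using uv \<open>symp E\<close> unfolding R_def by (auto dest: sympD)
  moreover have "R\<^sup>*\<^sup>* x u \<and> R\<^sup>*\<^sup>* u x" if "x \<in> S" for x
    using S that uv(1) enlarge[of S] unfolding connected_set_def by blast
  moreover have "R\<^sup>*\<^sup>* x v \<and> R\<^sup>*\<^sup>* v x" if "x \<in> T" for x
    using T that uv(2) enlarge[of T] unfolding connected_set_def by blast
  ultimately have "R\<^sup>*\<^sup>* x u \<and> R\<^sup>*\<^sup>* u x" if "x \<in> S \<union> T" for x
    using that by (blast intro: rtranclp_trans)
  then have "R\<^sup>*\<^sup>* x y" if "x \<in> S \<union> T" "y \<in> S \<union> T" for x y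
    using that by (blast intro: rtranclp_trans)
  then show ?thesis
    using uv(1) unfolding connected_set_def R_def by blast
qed

lemma induced_minor_model_complete:
  assumes "minor_model V E VM EM B" and "\<And>x y. x \<in> VM \<Longrightarrow> y \<in> VM \<Longrightarrow> x \<noteq> y \<Longrightarrow> EM x y"
  shows "induced_minor_model V E VM EM B"
  using assms unfolding induced_minor_model_def by blast

lemma K5_minor_model_induced:
  "minor_model V E K5_V K5_E B \<Longrightarrow> induced_minor_model V E K5_V K5_E B"
  by (rule induced_minor_model_complete) (auto simp: K5_E_def)

lemma K5_V_eq: "K5_V = {0, 1, 2, 3, 4}"
  by (auto simp: K5_V_def)

lemma K222_V_eq: "K222_V = {0, 1, 2, 3, 4, 5}"
  by (auto simp: K222_V_def)

text \<open>The hypothesis \<open>EM\<close> says that \<open>p, q, r, s, t, u\<close> span an octahedron in \<open>M\<close> with antipodal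
  pairs \<open>{p, q}\<close>, \<open>{r, t}\<close>, \<open>{s, u}\<close>.\<close>
lemma K5_minor_model_by_merging:
  assumes "symp E" and B: "minor_model V E VM EM B"
    and VM: "VM = {p, q, r, s, t, u}" and dist: "distinct [p, q, r, s, t, u]"
    and EM: "\<And>x y. x \<in> VM \<Longrightarrow> y \<in> VM \<Longrightarrow> x \<noteq> y \<Longrightarrow> {x, y} \<notin> {{p, q}, {r, t}, {s, u}} \<Longrightarrow> EM x y"
    and pq: "joined E (B p) (B q)"
  shows "minor_model V E K5_V K5_E (\<lambda>k. [B p, B q, B r, B s, B t \<union> B u] ! k)"
proof -
  have conn: "\<And>x. x \<in> VM \<Longrightarrow> B x \<subseteq> V \<and> connected_set E (B x)"
    and disj: "\<And>x y. x \<in> VM \<Longrightarrow> y \<in> VM \<Longrightarrow> x \<noteq> y \<Longrightarrow> B x \<inter> B y = {}"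
    and cover: "(\<Union>x\<in>VM. B x) = V"
    and join: "\<And>x y. x \<in> VM \<Longrightarrow> y \<in> VM \<Longrightarrow> EM x y \<Longrightarrow> joined E (B x) (B y)"
    using B unfolding minor_model_def by blast+
  have J: "joined E (B x) (B y)"
    if "x \<in> VM" "y \<in> VM" "x \<noteq> y" "{x, y} \<notin> {{p, q}, {r, t}, {s, u}}" for x y
    using that join EM by blast
  have tu: "joined E (B t) (B u)"
    using J[of t u] dist unfolding VM by (auto simp: doubleton_eq_iff)
  \<comment> \<open>the simplifier needs every inequality in both orientations\<close>
  have dist_rev: "distinct [u, t, s, r, q, p]"
    using dist by auto
  let ?C = "\<lambda>k. [B p, B q, B r, B s, B t \<union> B u] ! k"
  have "\<forall>k\<in>K5_V. ?C k \<subseteq> V \<and> connected_set E (?C k)"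
    unfolding K5_V_eq using conn connected_set_Un[OF \<open>symp E\<close> _ _ tu] unfolding VM by auto
  moreover have "\<forall>k\<in>K5_V. \<forall>l\<in>K5_V. k \<noteq> l \<longrightarrow> ?C k \<inter> ?C l = {}"
    unfolding K5_V_eq using dist dist_rev by (simp add: Int_Un_distrib Int_Un_distrib2 disj[unfolded VM])
  moreover have "(\<Union>k\<in>K5_V. ?C k) = V"
    unfolding K5_V_eq cover[symmetric] VM by (simp add: Un_ac)
  moreover have "\<forall>k\<in>K5_V. \<forall>l\<in>K5_V. K5_E k l \<longrightarrow> joined E (?C k) (?C l)"
    unfolding K5_V_eq K5_E_def using dist dist_rev
    by (simp add: J[unfolded VM] pq joined_commute[OF \<open>symp E\<close> pq] doubleton_eq_iff)
  ultimately show ?thesis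
    unfolding minor_model_def by (intro conjI)
qed

lemma separates_after_merging:
  assumes dist: "distinct [p, q, r, s, t, u]" and "a \<in> B i" "b \<in> B j"
    and "i \<in> {p, q, r, s, t, u}" "j \<in> {p, q, r, s, t, u}" "i \<noteq> j" "{i, j} \<noteq> {t, u}"
  shows "separates K5_V (\<lambda>k. [B p, B q, B r, B s, B t \<union> B u] ! k) a b"
proof -
  define idx :: "_ \<Rightarrow> nat" where
    "idx x = (if x = p then 0 else if x = q then 1 else if x = r then 2 else if x = s then 3 else 4)" for x
  have dist_rev: "distinct [u, t, s, r, q, p]"
    using dist by auto
  have "idx x \<in> K5_V \<and> B x \<subseteq> [B p, B q, B r, B s, B t \<union> B u] ! idx x"
    if "x \<in> {p, q, r, s, t, u}" for x
    using that dist dist_rev unfolding idx_def K5_V_eq by auto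
  moreover have "idx i \<noteq> idx j"
    using assms dist_rev unfolding idx_def by (auto simp: doubleton_eq_iff)
  ultimately show ?thesis
    using assms unfolding separates_def by blast
qed

lemma K222_octahedron_labelling:
  assumes "p \<in> K222_V" "q \<in> K222_V" "p \<noteq> q" "p div 2 = q div 2" "i \<noteq> j"
  obtains r s t u where "K222_V = {p, q, r, s, t, u}" "distinct [p, q, r, s, t, u]"
    "\<And>x y. x \<in> K222_V \<Longrightarrow> y \<in> K222_V \<Longrightarrow> x \<noteq> y \<Longrightarrow> {x, y} \<notin> {{p, q}, {r, t}, {s, u}} \<Longrightarrow> K222_E x y"
    "{i, j} \<noteq> {t, u}"
proof -
  note labelling = that
  define octahedron where "octahedron r s t u \<longleftrightarrow> K222_V = {p, q, r, s, t, u} \<and>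
    distinct [p, q, r, s, t, u] \<and>
    (\<forall>x\<in>K222_V. \<forall>y\<in>K222_V. x \<noteq> y \<and> {x, y} \<notin> {{p, q}, {r, t}, {s, u}} \<longrightarrow> K222_E x y)"
    for r s t u
  have by_octahedron: thesis if "octahedron r s t u" "{i, j} \<noteq> {t, u}" for r s t u
  proof -
    from that(1) have "K222_V = {p, q, r, s, t, u}" "distinct [p, q, r, s, t, u]"
      "\<And>x y. x \<in> K222_V \<Longrightarrow> y \<in> K222_V \<Longrightarrow> x \<noteq> y \<Longrightarrow> {x, y} \<notin> {{p, q}, {r, t}, {s, u}} \<Longrightarrow> K222_E x y"
      unfolding octahedron_def by auto
    from this that(2) show thesis by (rule labelling)
  qed
  have choose: thesis
    if "octahedron r s t u" "octahedron r' s' t' u'" "{t, u} \<inter> {t', u'} = {}" for r s t u r' s' t' u'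
  proof (cases "{i, j} = {t, u}")
    case True
    then have "{i, j} \<noteq> {t', u'}"
      using \<open>i \<noteq> j\<close> that(3) by (auto simp: doubleton_eq_iff)
    then show thesis by (rule by_octahedron[OF that(2)])
  next
    case False
    then show thesis by (rule by_octahedron[OF that(1)])
  qed
  \<comment> \<open>the two labellings of each case merge disjoint pairs \<open>{t, u}\<close>\<close>
  from assms(1-4) consider "{p, q} = {0, 1}" | "{p, q} = {2, 3}" | "{p, q} = {4, 5}"
    unfolding K222_V_eq by auto
  then show thesis
  proof cases
    case 1
    show thesis
      by (rule choose[of 3 5 2 4 2 4 3 5])
        (use 1 in \<open>auto simp: octahedron_def K222_V_eq K222_E_def doubleton_eq_iff\<close>)
  next
    case 2
    show thesis
      by (rule choose[of 1 5 0 4 0 4 1 5])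
        (use 2 in \<open>auto simp: octahedron_def K222_V_eq K222_E_def doubleton_eq_iff\<close>)
  next
    case 3
    show thesis
      by (rule choose[of 1 3 0 2 0 2 1 3])
        (use 3 in \<open>auto simp: octahedron_def K222_V_eq K222_E_def doubleton_eq_iff\<close>)
  qed
qed

lemma K5_model_from_joined_K222_part:
  assumes "symp E" and B: "minor_model V E K222_V K222_E B" and "separates K222_V B a b"
    and "p \<in> K222_V" "q \<in> K222_V" "p \<noteq> q" "p div 2 = q div 2" and "joined E (B p) (B q)"
  shows "\<exists>C. induced_minor_model V E K5_V K5_E C \<and> separates K5_V C a b"
proof -
  obtain i j where ij: "i \<in> K222_V" "j \<in> K222_V" "i \<noteq> j" "a \<in> B i" "b \<in> B j"
    using \<open>separates K222_V B a b\<close> unfolding separates_def by blast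
  obtain r s t u where VM: "K222_V = {p, q, r, s, t, u}" and dist: "distinct [p, q, r, s, t, u]"
    and EM: "\<And>x y. x \<in> K222_V \<Longrightarrow> y \<in> K222_V \<Longrightarrow> x \<noteq> y \<Longrightarrow> {x, y} \<notin> {{p, q}, {r, t}, {s, u}} \<Longrightarrow> K222_E x y"
    and "{i, j} \<noteq> {t, u}"
    using K222_octahedron_labelling[OF assms(4-7) \<open>i \<noteq> j\<close>] by blast
  let ?C = "\<lambda>k. [B p, B q, B r, B s, B t \<union> B u] ! k"
  have "induced_minor_model V E K5_V K5_E ?C"
    using K5_minor_model_by_merging[OF \<open>symp E\<close> B VM dist EM \<open>joined E (B p) (B q)\<close>]
    by (rule K5_minor_model_induced)
  moreover have "separates K5_V ?C a b"
    using separates_after_merging[OF dist ij(4,5) _ _ ij(3) \<open>{i, j} \<noteq> {t, u}\<close>] ij(1,2)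
    unfolding VM by blast
  ultimately show ?thesis by blast
qed

theorem mainTheorem16:
  fixes V :: "'a set" and E :: "'a \<Rightarrow> 'a \<Rightarrow> bool" and a b :: 'a
  assumes "graph V E" and "E a b"
    and "(\<exists>B. minor_model V E K5_V K5_E B \<and> separates K5_V B a b) \<or>
         (\<exists>B. minor_model V E K222_V K222_E B \<and> separates K222_V B a b)"
  shows "(\<exists>B. induced_minor_model V E K5_V K5_E B \<and> separates K5_V B a b) \<or>
         (\<exists>B. induced_minor_model V E K222_V K222_E B \<and> separates K222_V B a b)"
  using assms(3)
proof (elim disjE exE conjE)
  fix B assume "minor_model V E K5_V K5_E B" "separates K5_V B a b"
  then show ?thesis using K5_minor_model_induced by blast
next
  fix B assume B: "minor_model V E K222_V K222_E B" and sep: "separates K222_V B a b"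
  show ?thesis
  proof (cases "induced_minor_model V E K222_V K222_E B")
    case True
    with sep show ?thesis by blast
  next
    case False
    then obtain p q where "p \<in> K222_V" "q \<in> K222_V" "p \<noteq> q" "p div 2 = q div 2"
      "joined E (B p) (B q)"
      using B unfolding induced_minor_model_def K222_E_def by blast
    with K5_model_from_joined_K222_part[OF graph_symp[OF \<open>graph V E\<close>] B sep]
    show ?thesis by blast
  qed
qed

end
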